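(* Let $f(n)=a_kn^k+a_{k-1}n^{k-1}+\cdots+a_0\in\mathbb{R}[n]$ be a polynomial of degree $k$ (so $a_k\neq0$). Then the sequence $(f(n))_{n\ge0}$ is: (1) not asymptotically $1$-log-concave if and only if $k=0$; (2) asymptotically $1$-log-concave but not asymptotically $2$-log-concave if and only if $k=1$; (3) asymptotically $r$-log-concave for every $r\geq1$ if and only if $k\geq 2$.
   Context: For a real sequence $\omega=(w_i)_{i\ge0}$ define $\widehat{\mathcal L}\omega=(w_{i+1}^2-w_iw_{i+2})_{i\ge0}$ and $\widehat{\mathcal L}^j\omega=\widehat{\mathcal L}(\widehat{\mathcal L}^{j-1}\omega)$. The sequence $\omega$ is asymptotically $r$-log-concave if there is $N$ such that $(\widehat{\mathcal L}^j\omega)_i>0$ for all $j\in\{1,\ldots,r\}$ and all $i\geq N$. *)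

theory Defs
  imports Complex_Main "HOL-Computational_Algebra.Polynomial"
begin

definition Lhat :: "(nat \<Rightarrow> real) \<Rightarrow> (nat \<Rightarrow> real)" where
  "Lhat w = (\<lambda>i. (w (i + 1))^2 - w i * w (i + 2))"

definition asymp_r_log_concave :: "nat \<Rightarrow> (nat \<Rightarrow> real) \<Rightarrow> bool" where
  "asymp_r_log_concave r w \<longleftrightarrow>
     (\<exists>N. \<forall>j\<in>{1..r}. \<forall>i\<ge>N. (Lhat ^^ j) w i > 0)"

end

theory Submission
  imports Defs
begin

text \<open>
  The operator \<open>Lhat\<close> maps the value sequence of a polynomial \<open>p\<close> of degree \<open>d \<ge> 1\<close> with
  leading coefficient \<open>a\<close> to the value sequence of the polynomial
  \<open>\<Delta>p(x) \<Delta>p(x+1) - p(x+1) \<Delta>\<^sup>2p(x)\<close>, where \<open>\<Delta>\<close> is the forward difference. Both products have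
  degree \<open>2(d - 1)\<close>, with leading coefficients \<open>d\<^sup>2a\<^sup>2\<close> and \<open>d(d - 1)a\<^sup>2\<close>, so the result has
  degree \<open>2(d - 1)\<close> and leading coefficient \<open>d a\<^sup>2 > 0\<close>. Hence constants are sent to \<open>0\<close>,
  linear polynomials to positive constants, and degree \<open>\<ge> 2\<close> is preserved with a positive
  leading coefficient, which makes all iterates eventually positive.
\<close>

definition shift_poly :: "'a::comm_semiring_1 poly \<Rightarrow> 'a poly" where
  "shift_poly p = p \<circ>\<^sub>p [:1, 1:]"

definition forward_diff :: "'a::comm_ring_1 poly \<Rightarrow> 'a poly" where
  "forward_diff p = shift_poly p - p"

lemma poly_shift_poly [simp]: "poly (shift_poly p) x = poly p (x + 1)"
  by (simp add: shift_poly_def poly_pcompose add.commute)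

lemma poly_forward_diff [simp]: "poly (forward_diff p) x = poly p (x + 1) - poly p x"
  by (simp add: forward_diff_def)

lemma degree_shift_poly [simp]:
  "degree (shift_poly (p :: 'a::idom poly)) = degree p"
  by (simp add: shift_poly_def degree_pcompose)

lemma lead_coeff_shift_poly [simp]:
  "lead_coeff (shift_poly (p :: 'a::idom poly)) = lead_coeff p"
  by (simp add: shift_poly_def lead_coeff_comp)

lemma shift_poly_eq_0_iff [simp]: "shift_poly (p :: 'a::idom poly) = 0 \<longleftrightarrow> p = 0"
  by (metis lead_coeff_shift_poly leading_coeff_0_iff)

lemma forward_diff_pCons:
  "forward_diff (pCons c q) = pCons 0 (forward_diff q) + shift_poly q"
  by (simp add: forward_diff_def shift_poly_def pcompose_pCons algebra_simps)

lemma forward_diff_top_coeff: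
  fixes p :: "'a::idom poly"
  shows "degree (forward_diff p) \<le> degree p - 1 \<and>
         coeff (forward_diff p) (degree p - 1) = of_nat (degree p) * lead_coeff p"
proof (induction p)
  case 0
  then show ?case by (simp add: forward_diff_def shift_poly_def)
next
  case (pCons c q)
  show ?case
  proof (cases "q = 0")
    case True
    then show ?thesis by (simp add: forward_diff_def shift_poly_def)
  next
    case False
    let ?d = "degree q" and ?r = "pCons 0 (forward_diff q)"
    have deg: "degree (forward_diff q) \<le> ?d - 1"
      and top: "coeff (forward_diff q) (?d - 1) = of_nat ?d * lead_coeff q"
      using pCons.IH by auto
    have const: "forward_diff q = 0" if "?d = 0"
      using deg top that by (metis le_zero_eq leading_coeff_0_iff mult_zero_left of_nat_0 diff_0_eq_0)
    have "degree ?r \<le> ?d"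
      using deg const by (cases "?d") auto
    moreover have "coeff ?r ?d = of_nat ?d * lead_coeff q"
      using top const by (cases "?d") auto
    moreover have "coeff (shift_poly q) ?d = lead_coeff q"
      by (metis degree_shift_poly lead_coeff_shift_poly)
    ultimately show ?thesis
      using False by (simp add: forward_diff_pCons degree_add_le algebra_simps)
  qed
qed

lemma forward_diff_degree_0: "degree (p :: 'a::idom poly) = 0 \<Longrightarrow> forward_diff p = 0"
  using forward_diff_top_coeff[of p]
  by (metis diff_0_eq_0 le_zero_eq leading_coeff_0_iff mult_zero_left of_nat_0)

lemma
  fixes p :: "'a::{idom, ring_char_0} poly"
  assumes "degree p = Suc m"
  shows degree_forward_diff: "degree (forward_diff p) = m"
    and lead_coeff_forward_diff: "lead_coeff (forward_diff p) = of_nat (Suc m) * lead_coeff p"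
proof -
  have le: "degree (forward_diff p) \<le> m"
    and top: "coeff (forward_diff p) m = of_nat (Suc m) * lead_coeff p"
    using forward_diff_top_coeff[of p] assms by auto
  have "p \<noteq> 0" using assms by auto
  then have "coeff (forward_diff p) m \<noteq> 0"
    by (simp add: top del: of_nat_Suc)
  then show "degree (forward_diff p) = m"
    using le le_degree by (metis le_antisym)
  with top show "lead_coeff (forward_diff p) = of_nat (Suc m) * lead_coeff p"
    by simp
qed

text \<open>This is \<open>p(x+1)\<^sup>2 - p(x) p(x+2)\<close>; the form in differences exhibits the cancellation of the
  two top degrees.\<close>

definition lhat_poly :: "'a::comm_ring_1 poly \<Rightarrow> 'a poly" where
  "lhat_poly p =
     forward_diff p * shift_poly (forward_diff p) - shift_poly p * forward_diff (forward_diff p)"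

lemma poly_lhat_poly: "poly (lhat_poly p) x = (poly p (x + 1))\<^sup>2 - poly p x * poly p (x + 2)"
  by (simp add: lhat_poly_def algebra_simps power2_eq_square)

lemma lhat_poly_degree_0: "degree (p :: 'a::idom poly) = 0 \<Longrightarrow> lhat_poly p = 0"
  by (simp add: lhat_poly_def forward_diff_degree_0)

lemma
  fixes p :: "'a::{idom, ring_char_0} poly"
  assumes p: "degree p = Suc m"
  shows degree_lhat_poly: "degree (lhat_poly p) = 2 * m"
    and lead_coeff_lhat_poly: "lead_coeff (lhat_poly p) = of_nat (Suc m) * (lead_coeff p)\<^sup>2"
proof -
  let ?a = "lead_coeff p" and ?\<Delta> = "forward_diff p"
  define A where "A = ?\<Delta> * shift_poly ?\<Delta>"
  define B where "B = shift_poly p * forward_diff ?\<Delta>"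
  have "?a \<noteq> 0" using p by (metis degree_0 leading_coeff_0_iff nat.distinct(1))
  have \<Delta>: "degree ?\<Delta> = m" "lead_coeff ?\<Delta> = of_nat (Suc m) * ?a"
    using degree_forward_diff[OF p] lead_coeff_forward_diff[OF p] by simp_all
  with \<open>?a \<noteq> 0\<close> have "?\<Delta> \<noteq> 0"
    by (metis leading_coeff_0_iff mult_eq_0_iff of_nat_eq_0_iff nat.distinct(1))
  have A_deg: "degree A = 2 * m"
    using \<Delta> \<open>?\<Delta> \<noteq> 0\<close> by (simp add: A_def degree_mult_eq)
  have A_top: "coeff A (2 * m) = (of_nat (Suc m) * ?a)\<^sup>2"
  proof -
    have "coeff A (2 * m) = lead_coeff A" using A_deg by simp
    also have "\<dots> = (of_nat (Suc m) * ?a)\<^sup>2"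
      by (simp only: A_def lead_coeff_mult lead_coeff_shift_poly \<Delta>(2) power2_eq_square)
    finally show ?thesis .
  qed
  have B: "degree B \<le> 2 * m \<and> coeff B (2 * m) = of_nat (m * Suc m) * ?a\<^sup>2"
  proof (cases m)
    case 0
    then have "B = 0" using \<Delta> by (simp add: B_def forward_diff_degree_0)
    then show ?thesis using 0 by simp
  next
    case (Suc n)
    have \<Delta>\<Delta>: "degree (forward_diff ?\<Delta>) = n"
      "lead_coeff (forward_diff ?\<Delta>) = of_nat (Suc n) * (of_nat (Suc m) * ?a)"
      using degree_forward_diff[of ?\<Delta> n] lead_coeff_forward_diff[of ?\<Delta> n] \<Delta> Suc by simp_all
    have deg_sum: "degree (shift_poly p) + degree (forward_diff ?\<Delta>) = 2 * m"
      using p Suc \<Delta>\<Delta>(1) by simp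
    have "degree B \<le> 2 * m"
      unfolding B_def deg_sum[symmetric] by (rule degree_mult_le)
    moreover have "coeff B (2 * m) = ?a * (of_nat (Suc n) * (of_nat (Suc m) * ?a))"
      by (simp only: B_def deg_sum[symmetric] coeff_mult_degree_sum lead_coeff_shift_poly \<Delta>\<Delta>(2))
    ultimately show ?thesis
      using Suc by (simp add: power2_eq_square algebra_simps)
  qed
  have top: "coeff (lhat_poly p) (2 * m) = of_nat (Suc m) * ?a\<^sup>2"
    using A_top B
    by (simp add: lhat_poly_def A_def[symmetric] B_def[symmetric] algebra_simps power2_eq_square)
  with \<open>?a \<noteq> 0\<close> have "coeff (lhat_poly p) (2 * m) \<noteq> 0"
    by (simp del: of_nat_Suc)
  moreover have "degree (lhat_poly p) \<le> 2 * m"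
    using A_deg B by (simp add: lhat_poly_def A_def[symmetric] B_def[symmetric] degree_diff_le)
  ultimately show "degree (lhat_poly p) = 2 * m"
    using le_degree by (metis le_antisym)
  with top show "lead_coeff (lhat_poly p) = of_nat (Suc m) * ?a\<^sup>2"
    by simp
qed

lemma lead_coeff_lhat_poly_pos:
  fixes p :: "'a::linordered_idom poly"
  assumes "degree p > 0"
  shows "lead_coeff (lhat_poly p) > 0"
proof -
  obtain m where m: "degree p = Suc m" using assms gr0_conv_Suc by blast
  then have "lead_coeff p \<noteq> 0" by (metis degree_0 leading_coeff_0_iff nat.distinct(1))
  then show ?thesis
    by (simp add: lead_coeff_lhat_poly[OF m] del: of_nat_Suc)
qed

lemma degree_lhat_poly_ge_2:
  fixes p :: "'a::{idom, ring_char_0} poly"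
  assumes "degree p \<ge> 2"
  shows "degree (lhat_poly p) \<ge> 2"
proof -
  obtain m where "degree p = Suc m" "m \<ge> 1"
    using assms by (metis Suc_le_D Suc_le_mono one_add_one plus_1_eq_Suc)
  then show ?thesis using degree_lhat_poly[of p m] by simp
qed

lemma lead_coeff_funpow_lhat_poly_pos:
  fixes p :: "'a::linordered_idom poly"
  assumes "degree p \<ge> 2" "j \<ge> 1"
  shows "lead_coeff ((lhat_poly ^^ j) p) > 0"
proof -
  have "degree ((lhat_poly ^^ i) p) \<ge> 2" for i
    using assms(1) by (induction i) (simp_all add: degree_lhat_poly_ge_2)
  moreover obtain i where "j = Suc i" using assms(2) by (metis Suc_le_D One_nat_def)
  ultimately show ?thesis
    by (metis funpow.simps(2) o_apply lead_coeff_lhat_poly_pos zero_less_numeral less_le_trans)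
qed

lemma Lhat_poly_seq: "Lhat (\<lambda>n. poly p (real n)) = (\<lambda>n. poly (lhat_poly p) (real n))"
  by (simp add: fun_eq_iff Lhat_def poly_lhat_poly add.commute)

lemma funpow_Lhat_poly_seq:
  "(Lhat ^^ j) (\<lambda>n. poly p (real n)) = (\<lambda>n. poly ((lhat_poly ^^ j) p) (real n))"
  by (induction j) (simp_all add: Lhat_poly_seq)

lemma eventually_poly_seq_pos:
  fixes q :: "real poly"
  assumes "lead_coeff q > 0"
  shows "eventually (\<lambda>n. poly q (real n) > 0) sequentially"
proof -
  have "eventually (\<lambda>x. poly q x \<ge> lead_coeff q) at_top"
    using poly_pinfty_gt_lc[OF assms] by (simp add: eventually_at_top_linorder)
  then have "eventually (\<lambda>x. poly q x > 0) at_top"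
    by eventually_elim (use assms in linarith)
  then show ?thesis
    using eventually_compose_filterlim filterlim_real_sequentially by blast
qed

lemma asymp_r_log_concave_iff_eventually:
  "asymp_r_log_concave r w \<longleftrightarrow> (\<forall>j\<in>{1..r}. eventually (\<lambda>i. (Lhat ^^ j) w i > 0) sequentially)"
  by (subst eventually_ball_finite_distrib[symmetric])
    (auto simp: asymp_r_log_concave_def eventually_sequentially)

lemma asymp_r_log_concave_poly_seq:
  assumes "\<And>j. j \<in> {1..r} \<Longrightarrow> lead_coeff ((lhat_poly ^^ j) p) > 0"
  shows "asymp_r_log_concave r (\<lambda>n. poly p (real n))"
  using assms eventually_poly_seq_pos
  by (simp add: asymp_r_log_concave_iff_eventually funpow_Lhat_poly_seq)

lemma not_asymp_r_log_concave_poly_seq: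
  assumes "j \<in> {1..r}" "(lhat_poly ^^ j) p = 0"
  shows "\<not> asymp_r_log_concave r (\<lambda>n. poly p (real n))"
  using assms by (auto simp: asymp_r_log_concave_iff_eventually funpow_Lhat_poly_seq
      intro!: bexI[of _ j])

lemma asymp_r_log_concave_poly_degree_ge_2:
  fixes p :: "real poly"
  assumes "degree p \<ge> 2"
  shows "asymp_r_log_concave r (\<lambda>n. poly p (real n))"
  using assms by (intro asymp_r_log_concave_poly_seq) (simp add: lead_coeff_funpow_lhat_poly_pos)

lemma not_asymp_1_log_concave_poly_degree_0:
  fixes p :: "real poly"
  assumes "degree p = 0"
  shows "\<not> asymp_r_log_concave 1 (\<lambda>n. poly p (real n))"
  using assms by (intro not_asymp_r_log_concave_poly_seq[of 1]) (simp_all add: lhat_poly_degree_0)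

lemma
  fixes p :: "real poly"
  assumes "degree p = 1"
  shows asymp_1_log_concave_poly_degree_1: "asymp_r_log_concave 1 (\<lambda>n. poly p (real n))"
    and not_asymp_2_log_concave_poly_degree_1: "\<not> asymp_r_log_concave 2 (\<lambda>n. poly p (real n))"
proof -
  show "asymp_r_log_concave 1 (\<lambda>n. poly p (real n))"
    using assms by (intro asymp_r_log_concave_poly_seq) (simp add: lead_coeff_lhat_poly_pos)
  have "degree (lhat_poly p) = 0"
    using assms degree_lhat_poly[of p 0] by simp
  then have "(lhat_poly ^^ 2) p = 0"
    by (simp add: numeral_2_eq_2 lhat_poly_degree_0)
  then show "\<not> asymp_r_log_concave 2 (\<lambda>n. poly p (real n))"
    by (intro not_asymp_r_log_concave_poly_seq[of 2]) simp_all
qed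

theorem corollary4p10:
  fixes p :: "real poly" and k :: nat
  assumes "p \<noteq> 0" and "k = degree p"
  shows "(\<not> asymp_r_log_concave 1 (\<lambda>n. poly p (real n)) \<longleftrightarrow> k = 0)
       \<and> ((asymp_r_log_concave 1 (\<lambda>n. poly p (real n)) \<and>
           \<not> asymp_r_log_concave 2 (\<lambda>n. poly p (real n))) \<longleftrightarrow> k = 1)
       \<and> ((\<forall>r\<ge>1. asymp_r_log_concave r (\<lambda>n. poly p (real n))) \<longleftrightarrow> k \<ge> 2)"
proof -
  consider "k = 0" | "k = 1" | "k \<ge> 2" by linarith
  then show ?thesis
  proof cases
    case 1
    then show ?thesis
      using assms(2) not_asymp_1_log_concave_poly_degree_0 by auto
  next
    case 2
    then have "\<not> (\<forall>r\<ge>1. asymp_r_log_concave r (\<lambda>n. poly p (real n)))"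
      using assms(2) not_asymp_2_log_concave_poly_degree_1 by force
    then show ?thesis
      using 2 assms(2) asymp_1_log_concave_poly_degree_1 not_asymp_2_log_concave_poly_degree_1 by auto
  next
    case 3
    then show ?thesis
      using assms(2) asymp_r_log_concave_poly_degree_ge_2 by auto
  qed
qed

end
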